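(* Let $n\ge 2$, $c=(c_1,\dots,c_n)^T$ with $c_k>0$ for all $k$, $e=(1,\dots,1)^T\in\mathbb{R}^n$, $D=\mathrm{diag}\{c_1^{-2},\dots,c_n^{-2}\}$. Let $\mathcal{E_D}=\{x\in\mathbb{R}^n:\sum_{k=1}^n (x_k-c_k)^2/c_k^2\le 1\}$ be the Dikin ellipsoid and $\mathcal{H}=\{x\in\mathbb{R}^n: e^Tx=e^Tc\}$. Define $$Q=D+\frac{n-1}{(e^Tc)^2}ee^T-\frac{1}{e^Tc}(ec^TD+Dce^T)=D+\sum_{i=1}^n\sum_{j=1}^n\left(\frac{n-1}{(e^Tc)^2}-\frac{1}{e^Tc}\left(\frac{1}{c_i}+\frac{1}{c_j}\right)\right)E_{ij}.$$ Then the Lorenz cone with vertex at the origin and base $\mathcal{H}\cap\mathcal{E_D}$, together with its reflection through the origin, is represented by $Q$: $$\{x\in\mathbb{R}^n: x^TQx\le 0\}=\{\lambda y:\ \lambda\in\mathbb{R},\ y\in\mathcal{H}\cap\mathcal{E_D}\}.$$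
   Context: $E_{ij}$ denotes the $n\times n$ matrix whose $(i,j)$ entry is $1$ and all other entries are $0$. *)

theory Defs
  imports "HOL-Analysis.Analysis"
begin

definition ones :: "real^'n" where
  "ones = (\<chi> i. 1)"

definition outer :: "real^'n \<Rightarrow> real^'n \<Rightarrow> real^'n^'n" where
  "outer u v = (\<chi> i j. u $ i * v $ j)"

definition dikinD :: "real^'n \<Rightarrow> real^'n^'n" where
  "dikinD c = (\<chi> i j. if i = j then 1 / (c $ i)^2 else 0)"

definition dikin_ellipsoid :: "real^'n \<Rightarrow> (real^'n) set" where
  "dikin_ellipsoid c = {x. (\<Sum>k\<in>UNIV. (x $ k - c $ k)^2 / (c $ k)^2) \<le> 1}"

definition hyperplaneH :: "real^'n \<Rightarrow> (real^'n) set" where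
  "hyperplaneH c = {x. ones \<bullet> x = ones \<bullet> c}"

definition lorenzQ :: "real^'n \<Rightarrow> real^'n^'n" where
  "lorenzQ c = dikinD c
     + ((real CARD('n) - 1) / (ones \<bullet> c)^2) *\<^sub>R outer ones ones
     - (1 / (ones \<bullet> c)) *\<^sub>R (outer ones (transpose (dikinD c) *v c) + outer (dikinD c *v c) ones)"

end

theory Submission
  imports Defs
begin

text \<open>
  Write \<open>r(x) = e\<^sup>T x / e\<^sup>T c\<close>. Completing the square gives
  \<open>x\<^sup>T Q x = \<Sum>\<^sub>i (x\<^sub>i / c\<^sub>i - r(x))\<^sup>2 - r(x)\<^sup>2\<close>.
  On \<open>\<H>\<close> we have \<open>r = 1\<close>, so there \<open>x\<^sup>T Q x \<le> 0\<close> is exactly the Dikin ellipsoid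
  inequality; on \<open>e\<^sup>T x = 0\<close> the form is a sum of squares vanishing only at the origin.
  As the form is homogeneous of degree two, every other \<open>x\<close> is a multiple of the point
  \<open>x / r(x)\<close> of \<open>\<H>\<close>.
\<close>

lemma outer_mult_vec: "outer u v *v x = (v \<bullet> x) *\<^sub>R u"
  by (simp add: outer_def matrix_vector_mult_def inner_vec_def vec_eq_iff sum_distrib_left mult_ac)

lemma transpose_dikinD: "transpose (dikinD c) = dikinD c"
  by (simp add: dikinD_def transpose_def vec_eq_iff)

lemma dikinD_mult_vec: "dikinD c *v x = (\<chi> i. x $ i / (c $ i)^2)"
  by (simp add: dikinD_def matrix_vector_mult_def vec_eq_iff if_distrib[of "\<lambda>a. a * _"]
      cong: if_cong)

lemma ones_inner: "ones \<bullet> x = (\<Sum>i\<in>UNIV. x $ i)"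
  by (simp add: ones_def inner_vec_def)

lemma quadratic_form_scaleR:
  fixes A :: "real^'n^'n"
  shows "(t *\<^sub>R x) \<bullet> (A *v (t *\<^sub>R x)) = t^2 * (x \<bullet> (A *v x))"
  by (simp add: matrix_vector_mult_scaleR power2_eq_square)

lemma lorenzQ_quadratic_form:
  fixes c x :: "real^'n"
  defines "r \<equiv> (ones \<bullet> x) / (ones \<bullet> c)"
  shows "x \<bullet> (lorenzQ c *v x) = (\<Sum>i\<in>UNIV. (x $ i / c $ i - r)^2) - r^2"
proof -
  define w :: "real^'n" where "w = (\<chi> i. 1 / c $ i)"
  have "dikinD c *v c = w"
    by (simp add: dikinD_mult_vec w_def power2_eq_square vec_eq_iff)
  then have "x \<bullet> (lorenzQ c *v x)
      = x \<bullet> (dikinD c *v x) + (real CARD('n) - 1) * r^2 - 2 * r * (w \<bullet> x)"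
    unfolding lorenzQ_def
    by (simp add: scaleR_matrix_vector_assoc[symmetric] outer_mult_vec transpose_dikinD r_def
        power2_eq_square inner_commute[of x] algebra_simps add_divide_distrib)
  also have "\<dots> = (\<Sum>i\<in>UNIV. (x $ i / c $ i - r)^2) - r^2"
    by (simp add: dikinD_mult_vec inner_vec_def w_def power2_diff sum.distrib sum_subtractf
        sum_distrib_left ones_inner power2_eq_square algebra_simps)
  finally show ?thesis .
qed

lemma lorenzQ_nonpos_imp_zero:
  fixes c x :: "real^'n"
  assumes "\<And>i. c $ i \<noteq> 0" and "ones \<bullet> x = 0" and "x \<bullet> (lorenzQ c *v x) \<le> 0"
  shows "x = 0"
proof -
  have "(\<Sum>i\<in>UNIV. (x $ i / c $ i)^2) \<le> 0"
    using assms(3) by (simp add: lorenzQ_quadratic_form assms(2))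
  then have "(\<Sum>i\<in>UNIV. (x $ i / c $ i)^2) = 0"
    by (simp add: order_antisym sum_nonneg)
  then have "\<forall>i\<in>UNIV. (x $ i / c $ i)^2 = 0"
    by (simp add: sum_nonneg_eq_0_iff)
  then show ?thesis
    using assms(1) by (simp add: vec_eq_iff)
qed

lemma dikin_ellipsoid_iff_lorenzQ_nonpos:
  fixes c y :: "real^'n"
  assumes "\<And>i. c $ i \<noteq> 0" and "ones \<bullet> c \<noteq> 0" and "y \<in> hyperplaneH c"
  shows "y \<in> dikin_ellipsoid c \<longleftrightarrow> y \<bullet> (lorenzQ c *v y) \<le> 0"
proof -
  have "(y $ i / c $ i - 1)^2 = (y $ i - c $ i)^2 / (c $ i)^2" for i
    using assms(1)[of i] by (simp add: diff_divide_distrib flip: power_divide)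
  moreover have "ones \<bullet> y / (ones \<bullet> c) = 1"
    using assms(2,3) by (simp add: hyperplaneH_def)
  ultimately show ?thesis
    by (simp add: lorenzQ_quadratic_form dikin_ellipsoid_def)
qed

lemma lorenzQ_nonpos_in_cone:
  fixes c x :: "real^'n"
  assumes c_nz: "\<And>i. c $ i \<noteq> 0" and s_nz: "ones \<bullet> c \<noteq> 0"
    and q: "x \<bullet> (lorenzQ c *v x) \<le> 0"
  shows "x \<in> {t *\<^sub>R y | t y. y \<in> hyperplaneH c \<inter> dikin_ellipsoid c}"
proof (cases "ones \<bullet> x = 0")
  case True
  then have "x = 0 *\<^sub>R c"
    using lorenzQ_nonpos_imp_zero[OF c_nz _ q] by simp
  moreover have "c \<in> hyperplaneH c \<inter> dikin_ellipsoid c"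
    by (simp add: hyperplaneH_def dikin_ellipsoid_def)
  ultimately show ?thesis by blast
next
  case False
  define y where "y = (ones \<bullet> c / (ones \<bullet> x)) *\<^sub>R x"
  have "y \<in> hyperplaneH c"
    using False by (simp add: y_def hyperplaneH_def)
  moreover have "y \<bullet> (lorenzQ c *v y) \<le> 0"
    using q unfolding y_def quadratic_form_scaleR by (simp add: mult_nonneg_nonpos)
  moreover have "x = (ones \<bullet> x / (ones \<bullet> c)) *\<^sub>R y"
    using False s_nz by (simp add: y_def)
  ultimately show ?thesis
    using dikin_ellipsoid_iff_lorenzQ_nonpos[OF c_nz s_nz] by blast
qed

theorem mainTheorem7:
  fixes c :: "real^'n"
  assumes "CARD('n) \<ge> 2"
    and "\<And>k. c $ k > 0"
  shows "{x :: real^'n. x \<bullet> (lorenzQ c *v x) \<le> 0}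
       = {t *\<^sub>R y | t y. y \<in> hyperplaneH c \<inter> dikin_ellipsoid c}"
proof -
  have c_nz: "\<And>i. c $ i \<noteq> 0"
    using assms(2) by (metis less_irrefl)
  have s_nz: "ones \<bullet> c \<noteq> 0"
    using assms(2) by (simp add: ones_inner sum_pos less_imp_neq[symmetric])
  have "(t *\<^sub>R y) \<bullet> (lorenzQ c *v (t *\<^sub>R y)) \<le> 0"
    if "y \<in> hyperplaneH c \<inter> dikin_ellipsoid c" for t y
    using that dikin_ellipsoid_iff_lorenzQ_nonpos[OF c_nz s_nz, of y]
    unfolding quadratic_form_scaleR by (simp add: mult_nonneg_nonpos)
  with lorenzQ_nonpos_in_cone[OF c_nz s_nz] show ?thesis
    by blast
qed

end
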